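(* Let $H$ be the real vector space of Hermitian matrices on a finite-dimensional system with inner product $\langle A,B\rangle=\mathrm{Tr}(AB)$. Let $\mathcal{K}\subset H$ be a proper convex cone (closed, convex, pointed, with nonempty interior) and $\mathcal{F}\subset H$ a compact set such that $\{\lambda Z:0\le\lambda\le1,\ Z\in\mathcal{F}\}$ is convex and $\mathcal{F}\cap\mathrm{int}(\mathcal{K})\neq\emptyset$. Define $R^{\mathcal{F}}_{\mathcal{K}}(\mathcal{E}):=\inf\{\lambda\in\mathbb{R}_+:\ (\mathcal{E}+\lambda\mathcal{E}')/(1+\lambda)\in\mathcal{F},\ \mathcal{E}'\in\mathcal{K}\}$ for $\mathcal{E}\in H$, and $\mathcal{N}:=\{\mathcal{E}\in H:\ \delta Z-\mathcal{E}\notin\mathcal{K}\ \ \forall\delta<1,\ Z\in\mathcal{F}\}$. If $\mathcal{E}\in\mathcal{N}$, then $$1+R^{\mathcal{F}}_{\mathcal{K}}(\mathcal{E})=\max\{\langle\varphi,\mathcal{E}\rangle:\ \varphi\in\mathcal{K}^*,\ \langle\varphi,Z\rangle\le1\ \ \forall Z\in\mathcal{F}\}.$$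
   Context: $\mathcal{K}^*:=\{\varphi\in H:\langle\varphi,x\rangle\ge0\ \forall x\in\mathcal{K}\}$ is the dual cone; $\mathrm{int}$ denotes interior; $\mathbb{R}_+$ the nonnegative reals. *)

theory Defs
  imports "HOL-Analysis.Analysis"
begin

definition herm :: "(complex^'n^'n) set" where
  "herm = {A. \<forall>i j. A$i$j = cnj (A$j$i)}"

text \<open>Hilbert-Schmidt inner product  <A,B> = Tr(AB)  (real on Hermitian matrices).\<close>
definition hs_inner :: "complex^'n^'n \<Rightarrow> complex^'n^'n \<Rightarrow> real" where
  "hs_inner A B = Re (trace (A ** B))"

definition herm_interior :: "(complex^'n^'n) set \<Rightarrow> (complex^'n^'n) set" where
  "herm_interior K = {x. \<exists>T. openin (top_of_set herm) T \<and> x \<in> T \<and> T \<subseteq> K}"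

definition proper_cone :: "(complex^'n^'n) set \<Rightarrow> bool" where
  "proper_cone K \<longleftrightarrow> K \<subseteq> herm \<and> cone K \<and> convex K \<and> closed K
      \<and> K \<inter> uminus ` K = {0} \<and> herm_interior K \<noteq> {}"

definition dual_cone :: "(complex^'n^'n) set \<Rightarrow> (complex^'n^'n) set" where
  "dual_cone K = {\<phi> \<in> herm. \<forall>x\<in>K. hs_inner \<phi> x \<ge> 0}"

definition robustness :: "(complex^'n^'n) set \<Rightarrow> (complex^'n^'n) set \<Rightarrow> complex^'n^'n \<Rightarrow> real" where
  "robustness F K E = Inf {l::real. l \<ge> 0 \<and> (\<exists>E'\<in>K. inverse (1 + l) *\<^sub>R (E + l *\<^sub>R E') \<in> F)}"

definition Nset :: "(complex^'n^'n) set \<Rightarrow> (complex^'n^'n) set \<Rightarrow> (complex^'n^'n) set" where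
  "Nset F K = {E \<in> herm. \<forall>\<delta>::real. \<forall>Z\<in>F. \<delta> < 1 \<longrightarrow> \<delta> *\<^sub>R Z - E \<notin> K}"

end

theory Submission
  imports Defs
begin

(* Weak duality: writing E = (1 + l) Z - l E' with Z in F and E' in K gives <phi, E> <= 1 + l
   for every feasible weight l.

   Strong duality: let r = 1 + R. Whenever s Z - E lies in K for some Z in F, we have s >= 1 by the
   hypothesis on E, and R <= s - 1: for s > 1 the weight s - 1 is feasible, and in general mixing Z
   with a point Z0 of F interior to K yields feasible weights arbitrarily close to s - 1. Hence E
   lies outside the convex set P = {s (c - k) | 0 <= s < r, c in [0,1] F, k in K}. A functional a
   separating E from P can be chosen in the span of P, hence Hermitian. Testing it along the rays of
   K, at c = Z0 and in the limit s -> r shows that a is nonnegative on K, that <a, E> > 0 and that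
   r <a, Z> <= <a, E> on F, so phi = (r / <a, E>) a is an optimal dual witness. *)

definition downscalings :: "'a::real_vector set \<Rightarrow> 'a set" where
  "downscalings F = {t *\<^sub>R Z | t Z. 0 \<le> t \<and> t \<le> 1 \<and> Z \<in> F}"

definition robustness_weights :: "'a::real_vector set \<Rightarrow> 'a set \<Rightarrow> 'a \<Rightarrow> real set" where
  "robustness_weights F K E = {l. 0 \<le> l \<and> (\<exists>E'\<in>K. inverse (1 + l) *\<^sub>R (E + l *\<^sub>R E') \<in> F)}"

lemma robustness_eq_Inf_weights: "robustness F K E = Inf (robustness_weights F K E)"
  by (simp add: robustness_def robustness_weights_def)

lemma in_downscalings:
  assumes "Z \<in> F"
  shows "Z \<in> downscalings F"
proof -
  have "Z = 1 *\<^sub>R Z \<and> 0 \<le> (1::real) \<and> (1::real) \<le> 1 \<and> Z \<in> F"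
    using assms by simp
  then show ?thesis
    unfolding downscalings_def by blast
qed

lemma robustness_weightsI:
  assumes "cone K" "Z \<in> F" "1 < \<sigma>" "\<sigma> *\<^sub>R Z - E \<in> K"
  shows "\<sigma> - 1 \<in> robustness_weights F K E"
proof -
  define E' where "E' = inverse (\<sigma> - 1) *\<^sub>R (\<sigma> *\<^sub>R Z - E)"
  have "E' \<in> K"
    using assms(1,3,4) by (simp add: E'_def cone_def)
  moreover have "inverse (1 + (\<sigma> - 1)) *\<^sub>R (E + (\<sigma> - 1) *\<^sub>R E') = Z"
    using assms(3) by (simp add: E'_def)
  ultimately show ?thesis
    using assms(2,3) by (auto simp: robustness_weights_def)
qed

lemma inner_le_one_plus_weight:
  fixes \<phi> :: "'a::real_inner"
  assumes "\<forall>k\<in>K. 0 \<le> inner \<phi> k" and "\<forall>Z\<in>F. inner \<phi> Z \<le> 1"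
    and "l \<in> robustness_weights F K E"
  shows "inner \<phi> E \<le> 1 + l"
proof -
  obtain E' Z where l: "0 \<le> l" and E': "E' \<in> K" and Z: "Z \<in> F"
    and Z_eq: "Z = inverse (1 + l) *\<^sub>R (E + l *\<^sub>R E')"
    using assms(3) by (auto simp: robustness_weights_def)
  have "E = (1 + l) *\<^sub>R Z - l *\<^sub>R E'"
    using l by (simp add: Z_eq)
  then have "inner \<phi> E = (1 + l) * inner \<phi> Z - l * inner \<phi> E'"
    by (simp add: inner_diff_right)
  moreover have "(1 + l) * inner \<phi> Z \<le> 1 + l"
    using mult_left_mono[of "inner \<phi> Z" 1 "1 + l"] assms(2) Z l by simp
  moreover have "0 \<le> l * inner \<phi> E'"
    using assms(1) E' l by simp
  ultimately show ?thesis by linarith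
qed

lemma convex_scaled_below:
  fixes D :: "'a::real_vector set"
  assumes "convex D"
  shows "convex {s *\<^sub>R d | s d. 0 \<le> s \<and> s < r \<and> d \<in> D}"
proof (rule convexI)
  fix x y and u v :: real
  assume "x \<in> {s *\<^sub>R d | s d. 0 \<le> s \<and> s < r \<and> d \<in> D}" "y \<in> {s *\<^sub>R d | s d. 0 \<le> s \<and> s < r \<and> d \<in> D}"
    and uv: "0 \<le> u" "0 \<le> v" "u + v = 1"
  then obtain s1 d1 s2 d2 where x: "x = s1 *\<^sub>R d1" "0 \<le> s1" "s1 < r" "d1 \<in> D"
    and y: "y = s2 *\<^sub>R d2" "0 \<le> s2" "s2 < r" "d2 \<in> D"
    by blast
  define \<sigma> where "\<sigma> = u * s1 + v * s2"
  have "0 \<le> \<sigma>" "\<sigma> < r"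
    using x y uv by (simp_all add: \<sigma>_def convex_bound_lt)
  have scaled_in: "s *\<^sub>R d \<in> {s *\<^sub>R d | s d. 0 \<le> s \<and> s < r \<and> d \<in> D}"
    if "0 \<le> s" "s < r" "d \<in> D" for s d
    using that by blast
  show "u *\<^sub>R x + v *\<^sub>R y \<in> {s *\<^sub>R d | s d. 0 \<le> s \<and> s < r \<and> d \<in> D}"
  proof (cases "\<sigma> = 0")
    case True
    then have zero: "u * s1 = 0" "v * s2 = 0"
      using x y uv by (simp_all add: \<sigma>_def add_nonneg_eq_0_iff)
    then have "u *\<^sub>R x + v *\<^sub>R y = 0 *\<^sub>R d1"
      unfolding x y scaleR_scaleR zero by simp
    then show ?thesis
      using scaled_in[of 0 d1] x \<open>\<sigma> < r\<close> True by simp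
  next
    case False
    then have "0 < \<sigma>" using \<open>0 \<le> \<sigma>\<close> by simp
    have "(u * s1 / \<sigma>) *\<^sub>R d1 + (v * s2 / \<sigma>) *\<^sub>R d2 \<in> D"
      using x y uv \<open>0 < \<sigma>\<close>
      by (intro convexD[OF assms]) (simp_all add: \<sigma>_def add_divide_distrib[symmetric])
    moreover have "u *\<^sub>R x + v *\<^sub>R y = \<sigma> *\<^sub>R ((u * s1 / \<sigma>) *\<^sub>R d1 + (v * s2 / \<sigma>) *\<^sub>R d2)"
      using \<open>0 < \<sigma>\<close> by (simp add: x y scaleR_add_right)
    ultimately show ?thesis
      using scaled_in \<open>0 \<le> \<sigma>\<close> \<open>\<sigma> < r\<close> by simp
  qed
qed

definition scaled_differences :: "real \<Rightarrow> 'a::real_vector set \<Rightarrow> 'a set \<Rightarrow> 'a set" where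
  "scaled_differences r C K = {s *\<^sub>R (c - k) | s c k. 0 \<le> s \<and> s < r \<and> c \<in> C \<and> k \<in> K}"

lemma convex_scaled_differences:
  assumes "convex C" "convex K"
  shows "convex (scaled_differences r C K)"
proof -
  have "scaled_differences r C K = {s *\<^sub>R d | s d. 0 \<le> s \<and> s < r \<and> d \<in> (\<Union>c\<in>C. \<Union>k\<in>K. {c - k})}"
    unfolding scaled_differences_def by blast
  then show ?thesis
    using convex_scaled_below[OF convex_differences[OF assms]] by simp
qed

lemma scaled_differences_subset:
  assumes "subspace W" "C \<subseteq> W" "K \<subseteq> W"
  shows "scaled_differences r C K \<subseteq> W"
  using assms unfolding scaled_differences_def by (blast intro: subspace_scale subspace_diff)

lemma mult_le_from_below:
  fixes r p b :: real
  assumes "0 \<le> r" "0 \<le> b" and below: "\<And>s. 0 \<le> s \<Longrightarrow> s < r \<Longrightarrow> s * p \<le> b"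
  shows "r * p \<le> b"
proof (cases "0 < p")
  case True
  have "r \<le> b / p"
  proof (rule dense_le)
    fix s assume "s < r"
    show "s \<le> b / p"
    proof (cases "0 \<le> s")
      case True
      then show ?thesis
        using below[OF True \<open>s < r\<close>] \<open>0 < p\<close> by (simp add: pos_le_divide_eq)
    next
      case False
      then show ?thesis
        using assms(2) \<open>0 < p\<close> by (smt (verit) divide_nonneg_pos)
    qed
  qed
  then show ?thesis
    using True by (simp add: pos_le_divide_eq mult.commute)
next
  case False
  then show ?thesis
    using assms(1,2) by (smt (verit) mult_nonneg_nonpos)
qed

lemma separating_functional_in_subspace:
  fixes P :: "'a::euclidean_space set"
  assumes "subspace W" "P \<subseteq> W" "E \<in> W" "convex P" "P \<noteq> {}" "E \<notin> P"
  shows "\<exists>a\<in>W. a \<noteq> 0 \<and> (\<forall>x\<in>P. inner a x \<le> inner a E)"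
proof -
  define V where "V = (+) E ` uminus ` P"
  have "convex V"
    unfolding V_def using assms(4) by (intro convex_translation convex_negations)
  moreover have "V \<noteq> {}" "0 \<notin> V"
    using assms(5,6) by (auto simp: V_def)
  ultimately obtain a where "a \<in> span V" "a \<noteq> 0" and a: "\<And>v. v \<in> V \<Longrightarrow> 0 \<le> inner a v"
    using separating_hyperplane_set_0_inspan by blast
  moreover have "span V \<subseteq> W"
    using assms(1-3) by (intro span_minimal) (auto simp: V_def subspace_diff)
  moreover have "inner a x \<le> inner a E" if "x \<in> P" for x
    using a[of "E - x"] that by (simp add: V_def inner_diff_right)
  ultimately show ?thesis
    by blast
qed

text \<open>\<open>W\<close> plays the role of the space of Hermitian matrices inside the Euclidean space of all
  complex matrices, whose inner product agrees with \<open>Tr(AB)\<close> on \<open>W\<close>; \<open>Z\<^sub>0\<close> is a point of \<open>F\<close>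
  in the interior of \<open>K\<close> relative to \<open>W\<close>.\<close>

locale robustness_duality =
  fixes W :: "'a::euclidean_space set" and K F :: "'a set" and E Z\<^sub>0 :: 'a and \<epsilon> :: real
  assumes subspace_W: "subspace W"
    and convex_cone_K: "convex_cone K" and K_subset_W: "K \<subseteq> W"
    and F_subset_W: "F \<subseteq> W" and convex_downscalings_F: "convex (downscalings F)"
    and E_in_W: "E \<in> W"
    and E_outside: "\<And>\<delta> Z. Z \<in> F \<Longrightarrow> \<delta> < 1 \<Longrightarrow> \<delta> *\<^sub>R Z - E \<notin> K"
    and Z\<^sub>0_in_F: "Z\<^sub>0 \<in> F" and \<epsilon>_pos: "0 < \<epsilon>" and ball_Z\<^sub>0: "ball Z\<^sub>0 \<epsilon> \<inter> W \<subseteq> K"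
begin

abbreviation R :: real where
  "R \<equiv> Inf (robustness_weights F K E)"

lemma convex_K: "convex K"
  using convex_cone_K by (simp add: convex_cone_def)

lemma cone_K: "cone K"
  using convex_cone_K by (simp add: convex_cone_iff cone_def)

lemma add_scaled_in_K: "x \<in> K \<Longrightarrow> y \<in> K \<Longrightarrow> 0 \<le> a \<Longrightarrow> x + a *\<^sub>R y \<in> K"
  by (simp add: convex_cone_K convex_cone_add convex_cone_scaleR)

lemma downscalings_subset_W: "downscalings F \<subseteq> W"
  using F_subset_W subspace_W by (auto simp: downscalings_def subspace_scale)

lemma one_le_scale:
  assumes "Z \<in> F" "\<delta> *\<^sub>R Z - E \<in> K"
  shows "1 \<le> \<delta>"
proof (rule ccontr)
  assume "\<not> 1 \<le> \<delta>"
  with E_outside[OF assms(1), of \<delta>] assms(2) show False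
    by simp
qed

lemma Z\<^sub>0_add_in_K:
  assumes "y \<in> W" "norm y < \<epsilon>"
  shows "Z\<^sub>0 + y \<in> K"
proof -
  have "Z\<^sub>0 + y \<in> W"
    using Z\<^sub>0_in_F F_subset_W assms(1) subspace_W by (auto intro: subspace_add)
  moreover have "dist Z\<^sub>0 (Z\<^sub>0 + y) < \<epsilon>"
    using assms(2) by (simp add: dist_norm)
  ultimately show ?thesis
    using ball_Z\<^sub>0 by auto
qed

lemma Z\<^sub>0_in_K: "Z\<^sub>0 \<in> K"
  using Z\<^sub>0_add_in_K[of 0] subspace_W \<epsilon>_pos by (simp add: subspace_0)

text \<open>Adding a positive multiple of the interior point \<open>Z\<^sub>0\<close> leaves room to shrink the scale.\<close>

lemma one_less_scale:
  assumes Z: "Z \<in> F" and x: "x \<in> K" and "0 < \<tau>"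
    and eq: "\<mu> *\<^sub>R Z - E = x + \<tau> *\<^sub>R Z\<^sub>0"
  shows "1 < \<mu>"
proof -
  define c where "c = \<epsilon> / (norm Z + 1)"
  have "0 < norm Z + 1"
    by (simp add: add_nonneg_pos)
  then have "0 < c" "c * norm Z < \<epsilon>"
    using \<epsilon>_pos by (simp_all add: c_def field_simps)
  then have Z\<^sub>0_shifted: "Z\<^sub>0 + (- c) *\<^sub>R Z \<in> K"
    using Z F_subset_W subspace_W by (intro Z\<^sub>0_add_in_K) (auto simp: subspace_neg subspace_scale)
  have "(\<mu> - \<tau> * c) *\<^sub>R Z - E = x + \<tau> *\<^sub>R (Z\<^sub>0 + (- c) *\<^sub>R Z)"
    using eq by (simp add: algebra_simps)
  also have "\<dots> \<in> K"
    using add_scaled_in_K[OF x Z\<^sub>0_shifted] \<open>0 < \<tau>\<close> by simp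
  finally have "1 \<le> \<mu> - \<tau> * c"
    by (rule one_le_scale[OF Z])
  with \<open>0 < \<tau>\<close> \<open>0 < c\<close> show ?thesis
    by (smt (verit) mult_pos_pos)
qed

lemma robustness_weights_nonempty: "robustness_weights F K E \<noteq> {}"
proof -
  define \<sigma> where "\<sigma> = norm E / \<epsilon> + 2"
  have \<sigma>: "1 < \<sigma>" "norm E < \<sigma> * \<epsilon>"
    using \<epsilon>_pos by (simp_all add: \<sigma>_def field_simps add_pos_nonneg)
  have "Z\<^sub>0 + (- inverse \<sigma>) *\<^sub>R E \<in> K"
    using \<sigma> E_in_W subspace_W by (intro Z\<^sub>0_add_in_K) (auto simp: subspace_neg subspace_scale field_simps)
  then have "\<sigma> *\<^sub>R (Z\<^sub>0 + (- inverse \<sigma>) *\<^sub>R E) \<in> K"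
    using cone_K \<sigma> by (simp add: cone_def)
  then have "\<sigma> - 1 \<in> robustness_weights F K E"
    using \<sigma> by (intro robustness_weightsI[OF cone_K Z\<^sub>0_in_F]) (simp_all add: scaleR_diff_right)
  then show ?thesis by blast
qed

lemma bdd_below_robustness_weights: "bdd_below (robustness_weights F K E)"
  by (auto simp: robustness_weights_def intro!: bdd_belowI[of _ 0])

lemma robustness_nonneg: "0 \<le> R"
  using robustness_weights_nonempty by (intro cInf_greatest) (auto simp: robustness_weights_def)

lemma dual_le_robustness:
  assumes "\<forall>k\<in>K. 0 \<le> inner \<phi> k" and "\<forall>Z\<in>F. inner \<phi> Z \<le> 1"
  shows "inner \<phi> E \<le> 1 + R"
proof -
  have "inner \<phi> E - 1 \<le> R"
    using robustness_weights_nonempty inner_le_one_plus_weight[OF assms]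
    by (intro cInf_greatest) (auto simp: algebra_simps)
  then show ?thesis by simp
qed

text \<open>For \<open>\<sigma> = 1\<close> the weight \<open>0\<close> is feasible only if \<open>E \<in> F\<close>, so the bound is obtained as a
  limit of feasible weights.\<close>

lemma robustness_le:
  assumes Z: "Z \<in> F" and K: "\<sigma> *\<^sub>R Z - E \<in> K"
  shows "R \<le> \<sigma> - 1"
proof -
  have "1 \<le> \<sigma>"
    by (rule one_le_scale[OF Z K])
  have approx: "R \<le> \<sigma> - 1 + \<sigma> * \<rho>" if "0 < \<rho>" for \<rho>
  proof -
    have "inverse (1 + \<rho>) *\<^sub>R Z + (\<rho> / (1 + \<rho>)) *\<^sub>R Z\<^sub>0 \<in> downscalings F"
      using in_downscalings[OF Z] in_downscalings[OF Z\<^sub>0_in_F] \<open>0 < \<rho>\<close>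
      by (intro convexD[OF convex_downscalings_F]) (simp_all add: field_simps)
    then obtain t Z' where t: "0 \<le> t" "t \<le> 1" and Z': "Z' \<in> F"
      and comb: "inverse (1 + \<rho>) *\<^sub>R Z + (\<rho> / (1 + \<rho>)) *\<^sub>R Z\<^sub>0 = t *\<^sub>R Z'"
      unfolding downscalings_def by blast
    define \<mu> where "\<mu> = \<sigma> * (1 + \<rho>) * t"
    have "\<mu> *\<^sub>R Z' = (\<sigma> * (1 + \<rho>)) *\<^sub>R (t *\<^sub>R Z')"
      by (simp add: \<mu>_def)
    also have "\<dots> = \<sigma> *\<^sub>R Z + (\<sigma> * \<rho>) *\<^sub>R Z\<^sub>0"
      using \<open>0 < \<rho>\<close> by (simp add: comb[symmetric] scaleR_add_right)
    finally have \<mu>Z': "\<mu> *\<^sub>R Z' - E = (\<sigma> *\<^sub>R Z - E) + (\<sigma> * \<rho>) *\<^sub>R Z\<^sub>0"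
      by simp
    have "0 < \<sigma> * \<rho>"
      using \<open>1 \<le> \<sigma>\<close> \<open>0 < \<rho>\<close> by simp
    then have "1 < \<mu>" "\<mu> *\<^sub>R Z' - E \<in> K"
      using one_less_scale[OF Z' K _ \<mu>Z'] add_scaled_in_K[OF K Z\<^sub>0_in_K] by (simp_all add: \<mu>Z')
    then have "\<mu> - 1 \<in> robustness_weights F K E"
      by (intro robustness_weightsI[OF cone_K Z'])
    then have "R \<le> \<mu> - 1"
      by (rule cInf_lower[OF _ bdd_below_robustness_weights])
    also have "\<mu> \<le> \<sigma> * (1 + \<rho>)"
      using t \<open>1 \<le> \<sigma>\<close> \<open>0 < \<rho>\<close> by (simp add: \<mu>_def mult_left_le)
    finally show ?thesis
      by (simp add: algebra_simps)
  qed
  show ?thesis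
  proof (rule field_le_epsilon)
    fix e :: real
    assume "0 < e"
    with approx[of "e / \<sigma>"] \<open>1 \<le> \<sigma>\<close> show "R \<le> \<sigma> - 1 + e"
      by simp
  qed
qed

lemma scaled_difference_ne_E:
  assumes s: "0 \<le> s" "s < 1 + R" and "c \<in> downscalings F" "k \<in> K"
  shows "s *\<^sub>R (c - k) \<noteq> E"
proof
  assume E_eq: "s *\<^sub>R (c - k) = E"
  obtain t Z where t: "0 \<le> t" "t \<le> 1" and "Z \<in> F" and c_eq: "c = t *\<^sub>R Z"
    using \<open>c \<in> downscalings F\<close> unfolding downscalings_def by blast
  have "(s * t) *\<^sub>R Z - E = s *\<^sub>R k"
    by (simp add: E_eq[symmetric] c_eq algebra_simps)
  then have "R \<le> s * t - 1"
    using robustness_le[OF \<open>Z \<in> F\<close>] cone_K \<open>k \<in> K\<close> s(1) by (simp add: cone_def)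
  also have "s * t \<le> s"
    using s(1) t by (simp add: mult_left_le)
  finally show False
    using s(2) by simp
qed

lemma separating_functional:
  obtains a where "a \<in> W" "a \<noteq> 0"
    and "\<And>s c k. 0 \<le> s \<Longrightarrow> s < 1 + R \<Longrightarrow> c \<in> downscalings F \<Longrightarrow> k \<in> K
      \<Longrightarrow> s * inner a (c - k) \<le> inner a E"
proof -
  define P where "P = scaled_differences (1 + R) (downscalings F) K"
  have in_P: "s *\<^sub>R (c - k) \<in> P" if "0 \<le> s" "s < 1 + R" "c \<in> downscalings F" "k \<in> K" for s c k
    using that unfolding P_def scaled_differences_def by blast
  have "P \<subseteq> W"
    unfolding P_def using subspace_W downscalings_subset_W K_subset_W by (rule scaled_differences_subset)
  have "convex P"
    unfolding P_def using convex_downscalings_F convex_K by (rule convex_scaled_differences)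
  have "P \<noteq> {}"
    using in_P[OF order_refl _ in_downscalings[OF Z\<^sub>0_in_F] Z\<^sub>0_in_K] robustness_nonneg by auto
  have "E \<notin> P"
    unfolding P_def scaled_differences_def using scaled_difference_ne_E by blast
  obtain a where "a \<in> W" "a \<noteq> 0" and sep: "\<And>x. x \<in> P \<Longrightarrow> inner a x \<le> inner a E"
    using separating_functional_in_subspace[OF subspace_W \<open>P \<subseteq> W\<close> E_in_W \<open>convex P\<close> \<open>P \<noteq> {}\<close> \<open>E \<notin> P\<close>]
    by auto
  show ?thesis
  proof (rule that[OF \<open>a \<in> W\<close> \<open>a \<noteq> 0\<close>])
    fix s c k
    assume "0 \<le> s" "s < 1 + R" "c \<in> downscalings F" "k \<in> K"
    from sep[OF in_P[OF this]] show "s * inner a (c - k) \<le> inner a E"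
      by simp
  qed
qed

end

locale robustness_separator = robustness_duality +
  fixes a :: 'a
  assumes a_in_W: "a \<in> W" and a_nonzero: "a \<noteq> 0"
    and separates: "\<And>s c k. 0 \<le> s \<Longrightarrow> s < 1 + R \<Longrightarrow> c \<in> downscalings F \<Longrightarrow> k \<in> K
      \<Longrightarrow> s * inner a (c - k) \<le> inner a E"
begin

lemma separates_at_half:
  assumes "c \<in> downscalings F" "k \<in> K"
  shows "inner a (c - k) \<le> 2 * inner a E"
  using separates[of "1 / 2", OF _ _ assms] robustness_nonneg by linarith

lemma inner_nonneg_on_K:
  assumes "k \<in> K"
  shows "0 \<le> inner a k"
proof (rule ccontr)
  assume "\<not> 0 \<le> inner a k"
  define x where "x = 2 * (\<bar>inner a E\<bar> + 1) / - inner a k"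
  have "0 \<le> x"
    unfolding x_def using \<open>\<not> 0 \<le> inner a k\<close> by (intro divide_nonneg_pos) auto
  then have "inner a (Z\<^sub>0 - (Z\<^sub>0 + x *\<^sub>R k)) \<le> 2 * inner a E"
    by (intro separates_at_half in_downscalings[OF Z\<^sub>0_in_F] add_scaled_in_K[OF Z\<^sub>0_in_K assms])
  moreover have "inner a (Z\<^sub>0 - (Z\<^sub>0 + x *\<^sub>R k)) = 2 * (\<bar>inner a E\<bar> + 1)"
    using \<open>\<not> 0 \<le> inner a k\<close> by (simp add: x_def inner_diff_right)
  ultimately show False
    by (smt (verit) abs_ge_self)
qed

lemma inner_E_pos: "0 < inner a E"
proof -
  define d where "d = \<epsilon> / (2 * norm a)"
  have "0 < d" "norm ((- d) *\<^sub>R a) < \<epsilon>"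
    using a_nonzero \<epsilon>_pos by (simp_all add: d_def)
  then have "Z\<^sub>0 + (- d) *\<^sub>R a \<in> K"
    using a_in_W subspace_W by (intro Z\<^sub>0_add_in_K) (simp_all add: subspace_neg subspace_scale)
  then have "inner a (Z\<^sub>0 - (Z\<^sub>0 + (- d) *\<^sub>R a)) \<le> 2 * inner a E"
    by (intro separates_at_half in_downscalings[OF Z\<^sub>0_in_F])
  moreover have "inner a (Z\<^sub>0 - (Z\<^sub>0 + (- d) *\<^sub>R a)) = d * inner a a"
    by (simp add: inner_diff_right)
  moreover have "0 < d * inner a a"
    using \<open>0 < d\<close> a_nonzero by simp
  ultimately show ?thesis
    by linarith
qed

lemma inner_le_on_F:
  assumes "Z \<in> F"
  shows "(1 + R) * inner a Z \<le> inner a E"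
proof (rule mult_le_from_below)
  fix s assume "0 \<le> s" "s < 1 + R"
  from separates[OF this in_downscalings[OF assms] convex_cone_contains_0[OF convex_cone_K]]
  show "s * inner a Z \<le> inner a E"
    by simp
qed (use robustness_nonneg inner_E_pos in auto)

lemma optimal_dual:
  defines "\<phi> \<equiv> ((1 + R) / inner a E) *\<^sub>R a"
  shows "\<phi> \<in> W" "\<forall>k\<in>K. 0 \<le> inner \<phi> k" "\<forall>Z\<in>F. inner \<phi> Z \<le> 1" "inner \<phi> E = 1 + R"
proof -
  show "\<phi> \<in> W"
    using a_in_W subspace_W by (simp add: \<phi>_def subspace_scale)
  show "\<forall>k\<in>K. 0 \<le> inner \<phi> k"
    using inner_nonneg_on_K inner_E_pos robustness_nonneg by (simp add: \<phi>_def)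
  show "\<forall>Z\<in>F. inner \<phi> Z \<le> 1"
    using inner_le_on_F inner_E_pos by (simp add: \<phi>_def divide_le_eq mult.commute)
  show "inner \<phi> E = 1 + R"
    using inner_E_pos by (simp add: \<phi>_def)
qed

end

lemma (in robustness_duality) exists_optimal_dual:
  "\<exists>\<phi>\<in>W. (\<forall>k\<in>K. 0 \<le> inner \<phi> k) \<and> (\<forall>Z\<in>F. inner \<phi> Z \<le> 1) \<and> inner \<phi> E = 1 + R"
proof (rule separating_functional)
  fix a
  assume "a \<in> W" "a \<noteq> 0" and "\<And>s c k. 0 \<le> s \<Longrightarrow> s < 1 + R \<Longrightarrow> c \<in> downscalings F \<Longrightarrow> k \<in> K
    \<Longrightarrow> s * inner a (c - k) \<le> inner a E"
  then interpret robustness_separator W K F E Z\<^sub>0 \<epsilon> a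
    by unfold_locales
  show ?thesis
    using optimal_dual by blast
qed

lemma hermI: "(\<And>i j. A$i$j = cnj (A$j$i)) \<Longrightarrow> A \<in> herm"
  unfolding herm_def by blast

lemma hermD: "A \<in> herm \<Longrightarrow> A$i$j = cnj (A$j$i)"
  unfolding herm_def by blast

lemma subspace_herm: "subspace (herm :: (complex^'n^'n) set)"
  unfolding subspace_def
proof (intro conjI ballI allI)
  show "0 \<in> herm"
    by (rule hermI) simp
  fix A B :: "complex^'n^'n" and c :: real
  assume "A \<in> herm" "B \<in> herm"
  show "A + B \<in> herm"
  proof (rule hermI)
    fix i j
    show "(A + B)$i$j = cnj ((A + B)$j$i)"
      using hermD[OF \<open>A \<in> herm\<close>, of i j] hermD[OF \<open>B \<in> herm\<close>, of i j] by simp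
  qed
  show "c *\<^sub>R A \<in> herm"
  proof (rule hermI)
    fix i j
    show "(c *\<^sub>R A)$i$j = cnj ((c *\<^sub>R A)$j$i)"
      using hermD[OF \<open>A \<in> herm\<close>, of i j] by simp
  qed
qed

lemma hs_inner_herm:
  assumes "x \<in> herm"
  shows "hs_inner a x = inner a x"
proof -
  have "hs_inner a x = (\<Sum>i\<in>UNIV. \<Sum>j\<in>UNIV. Re (a$i$j * x$j$i))"
    by (simp add: hs_inner_def trace_def matrix_matrix_mult_def)
  also have "\<dots> = (\<Sum>i\<in>UNIV. \<Sum>j\<in>UNIV. inner (a$i$j) (x$i$j))"
  proof (intro sum.cong refl)
    fix i j
    have "x$j$i = cnj (x$i$j)"
      by (rule hermD[OF assms])
    then show "Re (a$i$j * x$j$i) = inner (a$i$j) (x$i$j)"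
      by (simp add: inner_complex_def)
  qed
  also have "\<dots> = inner a x"
    by (simp add: inner_vec_def)
  finally show ?thesis .
qed

theorem lemma3:
  fixes K F :: "(complex^'n^'n) set" and E :: "complex^'n^'n"
  assumes "proper_cone K"
    and "F \<subseteq> herm" and "compact F"
    and "convex {t *\<^sub>R Z | t Z. 0 \<le> t \<and> t \<le> 1 \<and> Z \<in> F}"
    and "F \<inter> herm_interior K \<noteq> {}"
    and "E \<in> Nset F K"
  shows "(\<exists>\<phi>\<in>dual_cone K. (\<forall>Z\<in>F. hs_inner \<phi> Z \<le> 1) \<and> hs_inner \<phi> E = 1 + robustness F K E)
       \<and> (\<forall>\<phi>\<in>dual_cone K. (\<forall>Z\<in>F. hs_inner \<phi> Z \<le> 1) \<longrightarrow> hs_inner \<phi> E \<le> 1 + robustness F K E)"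
proof -
  have K_herm: "K \<subseteq> herm" and "convex_cone K"
    using assms(1) unfolding proper_cone_def convex_cone_def conic_def cone_def by auto
  obtain Z\<^sub>0 T where "Z\<^sub>0 \<in> F" "openin (top_of_set herm) T" "Z\<^sub>0 \<in> T" "T \<subseteq> K"
    using assms(5) unfolding herm_interior_def by blast
  then obtain \<epsilon> where "0 < \<epsilon>" "ball Z\<^sub>0 \<epsilon> \<inter> herm \<subseteq> K"
    unfolding openin_contains_ball by blast
  interpret robustness_duality herm K F E Z\<^sub>0 \<epsilon>
    using subspace_herm \<open>convex_cone K\<close> K_herm assms(2,4,6) \<open>Z\<^sub>0 \<in> F\<close> \<open>0 < \<epsilon>\<close> \<open>ball Z\<^sub>0 \<epsilon> \<inter> herm \<subseteq> K\<close>
    by unfold_locales (auto simp: downscalings_def Nset_def)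
  have dual_cone_iff: "\<phi> \<in> dual_cone K \<longleftrightarrow> \<phi> \<in> herm \<and> (\<forall>k\<in>K. 0 \<le> inner \<phi> k)" for \<phi>
    using K_herm by (auto simp: dual_cone_def hs_inner_herm subset_iff)
  have bounded_on_F_iff: "(\<forall>Z\<in>F. hs_inner \<phi> Z \<le> 1) \<longleftrightarrow> (\<forall>Z\<in>F. inner \<phi> Z \<le> 1)" for \<phi>
    using assms(2) by (auto simp: hs_inner_herm subset_iff)
  show ?thesis
    using exists_optimal_dual dual_le_robustness hs_inner_herm[OF E_in_W]
    by (auto simp: dual_cone_iff bounded_on_F_iff robustness_eq_Inf_weights)
qed

end
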